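(* Let $T$ be a locally finite tree rooted at $o$, and for $r\in\mathbb N$ let $T(r)$ be the subtree induced by the vertices at distance at most $r$ from $o$. For every $x>0$ the limits $\lim_{r\to\infty}\mathcal R_x(T(2r),o)$ and $\lim_{r\to\infty}\mathcal R_x(T(2r+1),o)$ exist, and the maps $$x\mapsto \lim_{r\to\infty}\mathcal R_x(T(2r),o),\qquad x\mapsto \lim_{r\to\infty}\mathcal R_x(T(2r+1),o)$$ are real-analytic on $(0,\infty)$.
   Context: A tree is locally finite if each $T(r)$ is finite. For a finite simple graph $G=(V,E)$ and $x>0$, the monomer-dimer measure on matchings $D\subseteq E$ is $\mu_{G,x}(D)=x^{|V|-2|D|}/Z_G(x)$ with $Z_G(x)=\sum_D x^{|V|-2|D|}$ over all matchings; $\mathcal R_x(G,o)$ is the $\mu_{G,x}$-probability that $o$ is not covered by any edge of $D$. *)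

theory Defs
  imports "HOL-Analysis.Analysis"
begin

definition simple_graph :: "'a set \<Rightarrow> ('a \<Rightarrow> 'a \<Rightarrow> bool) \<Rightarrow> bool" where
  "simple_graph V E \<longleftrightarrow> (\<forall>u v. E u v \<longrightarrow> u \<in> V \<and> v \<in> V \<and> u \<noteq> v \<and> E v u)"

definition walk :: "'a set \<Rightarrow> ('a \<Rightarrow> 'a \<Rightarrow> bool) \<Rightarrow> 'a list \<Rightarrow> bool" where
  "walk V E xs \<longleftrightarrow> xs \<noteq> [] \<and> set xs \<subseteq> V \<and> (\<forall>i. Suc i < length xs \<longrightarrow> E (xs ! i) (xs ! Suc i))"

definition connected_graph :: "'a set \<Rightarrow> ('a \<Rightarrow> 'a \<Rightarrow> bool) \<Rightarrow> bool" where
  "connected_graph V E \<longleftrightarrow> (\<forall>u\<in>V. \<forall>v\<in>V. \<exists>xs. walk V E xs \<and> hd xs = u \<and> last xs = v)"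

definition has_cycle :: "'a set \<Rightarrow> ('a \<Rightarrow> 'a \<Rightarrow> bool) \<Rightarrow> bool" where
  "has_cycle V E \<longleftrightarrow> (\<exists>xs. walk V E xs \<and> distinct xs \<and> length xs \<ge> 3 \<and> E (last xs) (hd xs))"

definition tree :: "'a set \<Rightarrow> ('a \<Rightarrow> 'a \<Rightarrow> bool) \<Rightarrow> bool" where
  "tree V E \<longleftrightarrow> simple_graph V E \<and> V \<noteq> {} \<and> connected_graph V E \<and> \<not> has_cycle V E"

text \<open>Vertices at graph distance at most r from rt (vertex set of T(r)).\<close>
definition ball_graph :: "'a set \<Rightarrow> ('a \<Rightarrow> 'a \<Rightarrow> bool) \<Rightarrow> 'a \<Rightarrow> nat \<Rightarrow> 'a set" where
  "ball_graph V E rt r = {v. \<exists>xs. walk V E xs \<and> hd xs = rt \<and> last xs = v \<and> length xs \<le> r + 1}"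

definition induced :: "('a \<Rightarrow> 'a \<Rightarrow> bool) \<Rightarrow> 'a set \<Rightarrow> 'a \<Rightarrow> 'a \<Rightarrow> bool" where
  "induced E W u v \<longleftrightarrow> u \<in> W \<and> v \<in> W \<and> E u v"

definition locally_finite_tree :: "'a set \<Rightarrow> ('a \<Rightarrow> 'a \<Rightarrow> bool) \<Rightarrow> 'a \<Rightarrow> bool" where
  "locally_finite_tree V E rt \<longleftrightarrow> (\<forall>r. finite (ball_graph V E rt r))"

definition graph_edges :: "'a set \<Rightarrow> ('a \<Rightarrow> 'a \<Rightarrow> bool) \<Rightarrow> 'a set set" where
  "graph_edges V E = {{u, v} | u v. u \<in> V \<and> v \<in> V \<and> E u v}"

definition matchings :: "'a set \<Rightarrow> ('a \<Rightarrow> 'a \<Rightarrow> bool) \<Rightarrow> 'a set set set" where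
  "matchings V E = {D. D \<subseteq> graph_edges V E \<and> (\<forall>e\<in>D. \<forall>e'\<in>D. e \<noteq> e' \<longrightarrow> e \<inter> e' = {})}"

definition md_Z :: "'a set \<Rightarrow> ('a \<Rightarrow> 'a \<Rightarrow> bool) \<Rightarrow> real \<Rightarrow> real" where
  "md_Z V E x = (\<Sum>D\<in>matchings V E. x ^ (card V - 2 * card D))"

definition md_measure :: "'a set \<Rightarrow> ('a \<Rightarrow> 'a \<Rightarrow> bool) \<Rightarrow> real \<Rightarrow> 'a set set \<Rightarrow> real" where
  "md_measure V E x D = x ^ (card V - 2 * card D) / md_Z V E x"

text \<open>R_x(G,rt): probability that rt is not covered by any edge of D.\<close>
definition md_R :: "'a set \<Rightarrow> ('a \<Rightarrow> 'a \<Rightarrow> bool) \<Rightarrow> real \<Rightarrow> 'a \<Rightarrow> real" where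
  "md_R V E x rt = (\<Sum>D\<in>{D\<in>matchings V E. \<forall>e\<in>D. rt \<notin> e}. md_measure V E x D)"

definition real_analytic_on :: "(real \<Rightarrow> real) \<Rightarrow> real set \<Rightarrow> bool" where
  "real_analytic_on f S \<longleftrightarrow> (\<forall>x0\<in>S. \<exists>\<epsilon>>0. \<exists>c::nat \<Rightarrow> real.
      \<forall>x. \<bar>x - x0\<bar> < \<epsilon> \<longrightarrow> (\<lambda>n. c n * (x - x0) ^ n) sums f x)"

end

theory Submission
  imports Defs "HOL-Complex_Analysis.Complex_Analysis"
begin

text \<open>
  Let \<open>Z(W)\<close> be the monomer-dimer partition function of the subgraph induced on a finite vertex
  set \<open>W\<close>, read as a polynomial in the monomer activity \<open>z\<close>, and \<open>\<rho>(W,w) = Z(W - w) / Z(W)\<close>, so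
  that the probability that \<open>w\<close> is uncovered is \<open>z \<rho>(W,w)\<close>. Splitting matchings according to
  the edge covering \<open>w\<close> gives \<open>Z(W) = z Z(W - w) + \<Sum>\<^sub>v\<^sub>~\<^sub>w Z(W - w - v)\<close>, i.e.
  \<open>1 / \<rho>(W,w) = z + \<Sum>\<^sub>v\<^sub>~\<^sub>w \<rho>(W - w, v)\<close>.

  For real \<open>x > 0\<close> this recursion reverses inequalities at each level. Going from the ball \<open>T(r)\<close>
  to \<open>T(r+2)\<close> only adds vertices beyond depth \<open>r\<close>; unfolding the recursion from the root until the
  walk first leaves \<open>T(r)\<close>, which in a tree happens after a number of steps of fixed parity,
  shows that \<open>R\<^sub>x(T(r))\<close> decreases along even \<open>r\<close> and increases along odd \<open>r\<close>. Both
  subsequences are bounded by \<open>1\<close>, hence converge.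

  For complex \<open>z\<close> with \<open>Re z > 0\<close> the same recursion gives \<open>Re (1 / \<rho>(W,w)) \<ge> Re z\<close> by
  induction on \<open>|W|\<close>; so \<open>Z(W)\<close> has no zeros there (Heilmann-Lieb) and
  \<open>|z \<rho>(W,w)| \<le> |z| / Re z\<close>. The holomorphic extensions of \<open>x \<mapsto> R\<^sub>x(T(r))\<close> thus form a locally
  bounded family on the right half plane. By Montel's theorem a subsequence converges to a
  holomorphic function, which agrees with the limit above on the positive reals; so that limit is
  real-analytic.
\<close>

definition matching_poly :: "('a \<Rightarrow> 'a \<Rightarrow> bool) \<Rightarrow> 'a set \<Rightarrow> 'b::comm_ring_1 \<Rightarrow> 'b" where
  "matching_poly E W z = (\<Sum>D\<in>matchings W (induced E W). z ^ (card W - 2 * card D))"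

lemma matchings_induced_iff:
  "D \<in> matchings W (induced E W) \<longleftrightarrow>
     (\<forall>e\<in>D. \<exists>u v. e = {u,v} \<and> u \<in> W \<and> v \<in> W \<and> E u v)
     \<and> (\<forall>e\<in>D. \<forall>e'\<in>D. e \<noteq> e' \<longrightarrow> e \<inter> e' = {})"
proof -
  have edge: "e \<in> graph_edges W (induced E W) \<longleftrightarrow> (\<exists>u v. e = {u,v} \<and> u \<in> W \<and> v \<in> W \<and> E u v)" for e
    unfolding graph_edges_def induced_def by auto
  show ?thesis by (simp only: matchings_def mem_Collect_eq subset_iff edge Ball_def)
qed

lemma matching_edgeD:
  assumes "D \<in> matchings W (induced E W)" "e \<in> D"
  obtains u v where "e = {u,v}" "u \<in> W" "v \<in> W" "E u v"
  using that bspec[OF conjunct1[OF assms(1)[unfolded matchings_induced_iff]] assms(2)] by blast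

lemma matching_disjointD:
  assumes "D \<in> matchings W (induced E W)" "e \<in> D" "e' \<in> D" "e \<noteq> e'"
  shows "e \<inter> e' = {}"
  using assms(1)[unfolded matchings_induced_iff] assms(2-4) by blast

lemma matchingI:
  assumes "\<And>e. e \<in> D \<Longrightarrow> \<exists>u v. e = {u,v} \<and> u \<in> W \<and> v \<in> W \<and> E u v"
    and "\<And>e e'. e \<in> D \<Longrightarrow> e' \<in> D \<Longrightarrow> e \<noteq> e' \<Longrightarrow> e \<inter> e' = {}"
  shows "D \<in> matchings W (induced E W)"
  unfolding matchings_induced_iff by (intro conjI ballI impI; rule assms; assumption)

lemma matching_subset_Pow: "D \<in> matchings W (induced E W) \<Longrightarrow> D \<subseteq> Pow W"
proof
  fix e assume "D \<in> matchings W (induced E W)" "e \<in> D"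
  then obtain u v where "e = {u,v}" "u \<in> W" "v \<in> W" by (rule matching_edgeD)
  then show "e \<in> Pow W" by simp
qed

lemma finite_matchings_induced: "finite W \<Longrightarrow> finite (matchings W (induced E W))"
  by (rule finite_subset[of _ "Pow (Pow W)"]) (auto dest: matching_subset_Pow)

lemma finite_matching: "finite W \<Longrightarrow> D \<in> matchings W (induced E W) \<Longrightarrow> finite D"
  by (meson matching_subset_Pow finite_Pow_iff finite_subset)

lemma empty_in_matchings_induced: "{} \<in> matchings W (induced E W)"
  by (rule matchingI) auto

lemma matchings_induced_empty: "matchings {} (induced E {}) = {{}}"
proof (rule set_eqI, rule iffI)
  fix D assume D: "D \<in> matchings {} (induced E {})"
  have "e \<notin> D" for e
  proof
    assume "e \<in> D"
    then show False by (rule matching_edgeD[OF D]) simp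
  qed
  then show "D \<in> {{}}" by blast
qed (simp add: empty_in_matchings_induced)

lemma card_matching_le:
  assumes irr: "\<And>u. \<not> E u u" and W: "finite W" and D: "D \<in> matchings W (induced E W)"
  shows "2 * card D \<le> card W"
proof -
  have card_edge: "card e = 2" if "e \<in> D" for e
    using irr by (metis matching_edgeD[OF D that] card_2_iff)
  have "card (\<Union>D) = (\<Sum>e\<in>D. card e)"
  proof (rule card_Union_disjoint)
    show "pairwise disjnt D"
      unfolding pairwise_def disjnt_def using matching_disjointD[OF D] by blast
  qed (use finite_matching[OF W D] card_edge in \<open>auto intro: card_ge_0_finite\<close>)
  also have "\<dots> = 2 * card D" using card_edge by simp
  finally have "card (\<Union>D) = 2 * card D" .
  moreover have "card (\<Union>D) \<le> card W"
    using card_mono[OF W] matching_subset_Pow[OF D] by blast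
  ultimately show ?thesis by simp
qed

lemma matching_induced_mono:
  assumes "W \<subseteq> W'" and D: "D \<in> matchings W (induced E W)"
  shows "D \<in> matchings W' (induced E W')"
proof (rule matchingI)
  fix e assume "e \<in> D"
  then obtain u v where "e = {u,v}" "u \<in> W" "v \<in> W" "E u v" by (rule matching_edgeD[OF D])
  then show "\<exists>u v. e = {u,v} \<and> u \<in> W' \<and> v \<in> W' \<and> E u v" using assms(1) by blast
qed (rule matching_disjointD[OF D])

lemma matching_induced_restrict:
  assumes D: "D \<in> matchings W (induced E W)" and "D' \<subseteq> D"
    and avoid: "\<And>e. e \<in> D' \<Longrightarrow> e \<inter> A = {}"
  shows "D' \<in> matchings (W - A) (induced E (W - A))"
proof (rule matchingI)
  fix e assume e: "e \<in> D'"
  then obtain u v where "e = {u,v}" "u \<in> W" "v \<in> W" "E u v"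
    using \<open>D' \<subseteq> D\<close> by (blast elim: matching_edgeD[OF D])
  then show "\<exists>u v. e = {u,v} \<and> u \<in> W - A \<and> v \<in> W - A \<and> E u v" using avoid[OF e] by blast
qed (use matching_disjointD[OF D] \<open>D' \<subseteq> D\<close> in blast)

lemma insert_matching_induced:
  assumes D: "D \<in> matchings (W - {u,v}) (induced E (W - {u,v}))"
    and uv: "u \<in> W" "v \<in> W" "E u v"
  shows "insert {u,v} D \<in> matchings W (induced E W)"
proof (rule matchingI)
  have "D \<subseteq> Pow (W - {u,v})" by (rule matching_subset_Pow[OF D])
  then have avoid: "e \<inter> {u,v} = {}" if "e \<in> D" for e using that by blast
  fix e e' assume "e \<in> insert {u,v} D" "e' \<in> insert {u,v} D" "e \<noteq> e'"
  then show "e \<inter> e' = {}" using avoid matching_disjointD[OF D] by blast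
next
  fix e assume "e \<in> insert {u,v} D"
  then show "\<exists>a b. e = {a,b} \<and> a \<in> W \<and> b \<in> W \<and> E a b"
    using uv matching_induced_mono[OF _ D, of W] matching_edgeD by blast
qed

lemma matchings_induced_Diff_singleton:
  "matchings (W - {w}) (induced E (W - {w})) = {D \<in> matchings W (induced E W). \<forall>e\<in>D. w \<notin> e}"
proof (rule set_eqI, rule iffI)
  fix D assume D: "D \<in> matchings (W - {w}) (induced E (W - {w}))"
  have "\<forall>e\<in>D. w \<notin> e" using matching_subset_Pow[OF D] by blast
  moreover have "D \<in> matchings W (induced E W)" by (rule matching_induced_mono[OF _ D]) blast
  ultimately show "D \<in> {D \<in> matchings W (induced E W). \<forall>e\<in>D. w \<notin> e}" by simp
next
  fix D assume "D \<in> {D \<in> matchings W (induced E W). \<forall>e\<in>D. w \<notin> e}"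
  then have D: "D \<in> matchings W (induced E W)" and avoid: "\<forall>e\<in>D. w \<notin> e" by simp_all
  show "D \<in> matchings (W - {w}) (induced E (W - {w}))"
    by (rule matching_induced_restrict[OF D subset_refl]) (use avoid in blast)
qed

lemma matchings_induced_covering:
  assumes sym: "\<And>u v. E u v \<Longrightarrow> E v u" and w: "w \<in> W"
  shows "{D \<in> matchings W (induced E W). \<exists>e\<in>D. w \<in> e} =
    (\<lambda>(v,D). insert {w,v} D) ` (SIGMA v:{v\<in>W. E w v}. matchings (W - {w,v}) (induced E (W - {w,v})))"
proof (rule set_eqI, rule iffI)
  fix D assume "D \<in> {D \<in> matchings W (induced E W). \<exists>e\<in>D. w \<in> e}"
  then obtain e where D: "D \<in> matchings W (induced E W)" and e: "e \<in> D" "w \<in> e" by blast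
  obtain v where v: "e = {w,v}" "v \<in> W" "E w v"
  proof -
    obtain a b where "e = {a,b}" "a \<in> W" "b \<in> W" "E a b" by (rule matching_edgeD[OF D e(1)])
    then show thesis using that e(2) sym by (metis empty_iff insert_commute insert_iff)
  qed
  have "e' \<inter> {w,v} = {}" if "e' \<in> D - {e}" for e'
    using matching_disjointD[OF D, of e' e] that e(1) v(1) by blast
  then have "D - {e} \<in> matchings (W - {w,v}) (induced E (W - {w,v}))"
    by (rule matching_induced_restrict[OF D Diff_subset])
  moreover have "D = insert {w,v} (D - {e})" using e v by auto
  ultimately show "D \<in> (\<lambda>(v,D). insert {w,v} D) `
      (SIGMA v:{v\<in>W. E w v}. matchings (W - {w,v}) (induced E (W - {w,v})))"
    using v by (intro image_eqI[of _ _ "(v, D - {e})"]) auto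
next
  fix D assume "D \<in> (\<lambda>(v,D). insert {w,v} D) `
      (SIGMA v:{v\<in>W. E w v}. matchings (W - {w,v}) (induced E (W - {w,v})))"
  then obtain v D' where D: "D = insert {w,v} D'" "v \<in> W" "E w v"
    and D': "D' \<in> matchings (W - {w,v}) (induced E (W - {w,v}))" by auto
  have "D \<in> matchings W (induced E W)"
    unfolding D(1) by (rule insert_matching_induced[OF D' w D(2,3)])
  then show "D \<in> {D \<in> matchings W (induced E W). \<exists>e\<in>D. w \<in> e}" using D(1) by auto
qed

lemma inj_on_insert_covering_edge:
  "inj_on (\<lambda>(v,D). insert {w,v} D) (SIGMA v:{v\<in>W. E w v}. matchings (W - {w,v}) (induced E (W - {w,v})))"
proof (rule inj_onI, clarsimp)
  fix v D v' D'
  assume D: "D \<in> matchings (W - {w,v}) (induced E (W - {w,v}))"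
    and D': "D' \<in> matchings (W - {w,v'}) (induced E (W - {w,v'}))"
    and eq: "insert {w, v} D = insert {w, v'} D'"
  have notin: "{w,x} \<notin> D" "{w,x} \<notin> D'" for x
    using matching_subset_Pow[OF D] matching_subset_Pow[OF D'] by auto
  then have "{w,v} = {w,v'}" using eq by blast
  then have "v = v'" by (metis doubleton_eq_iff)
  then show "v = v' \<and> D = D'" using eq notin by (metis insert_ident)
qed

lemma matching_poly_empty: "matching_poly E {} z = 1"
  unfolding matching_poly_def matchings_induced_empty by simp

lemma matching_poly_of_real: "matching_poly E W (of_real x :: complex) = of_real (matching_poly E W x)"
  unfolding matching_poly_def by simp

lemma matching_poly_holomorphic: "matching_poly E W holomorphic_on S"
  unfolding matching_poly_def by (intro holomorphic_intros)

lemma matching_poly_pos: "finite W \<Longrightarrow> x > 0 \<Longrightarrow> matching_poly E W (x::real) > 0"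
  unfolding matching_poly_def
  by (rule sum_pos) (use finite_matchings_induced[of W E] empty_in_matchings_induced[of W E] in auto)

lemma sum_matchings_avoiding:
  assumes irr: "\<And>u. \<not> E u u" and W: "finite W" and w: "w \<in> W"
  shows "(\<Sum>D\<in>{D \<in> matchings W (induced E W). \<forall>e\<in>D. w \<notin> e}. z ^ (card W - 2 * card D))
       = z * matching_poly E (W - {w}) z"
proof -
  have "card W = Suc (card (W - {w}))" using card_Suc_Diff1[OF W w] by simp
  then have "z ^ (card W - 2 * card D) = z * z ^ (card (W - {w}) - 2 * card D)"
    if "D \<in> matchings (W - {w}) (induced E (W - {w}))" for D
    using card_matching_le[OF irr _ that] W by (simp add: Suc_diff_le)
  then show ?thesis
    unfolding matching_poly_def sum_distrib_left matchings_induced_Diff_singleton[symmetric]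
    by (rule sum.cong[OF refl])
qed

lemma sum_matchings_covering:
  assumes sym: "\<And>u v. E u v \<Longrightarrow> E v u" and irr: "\<And>u. \<not> E u u"
    and W: "finite W" and w: "w \<in> W"
  shows "(\<Sum>D\<in>{D \<in> matchings W (induced E W). \<exists>e\<in>D. w \<in> e}. z ^ (card W - 2 * card D))
       = (\<Sum>v\<in>{v\<in>W. E w v}. matching_poly E (W - {w,v}) z)"
proof -
  let ?M = "\<lambda>v. matchings (W - {w,v}) (induced E (W - {w,v}))"
  have card_insert: "z ^ (card W - 2 * card (insert {w,v} D)) = z ^ (card (W - {w,v}) - 2 * card D)"
    if v: "v \<in> W" "E w v" and D: "D \<in> ?M v" for v D
  proof -
    have "{w,v} \<notin> D" using matching_subset_Pow[OF D] by auto
    then have "card (insert {w,v} D) = Suc (card D)" using finite_matching[OF _ D] W by simp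
    moreover have "card W = card (W - {w,v}) + 2"
    proof -
      have "w \<noteq> v" using v(2) irr by blast
      then have sub: "{w,v} \<subseteq> W" and "card {w,v} = 2" using v w by auto
      then have "card (W - {w,v}) = card W - 2" "2 \<le> card W"
        using card_Diff_subset[OF _ sub] card_mono[OF W sub] by auto
      then show ?thesis by simp
    qed
    ultimately show ?thesis by simp
  qed
  have "(\<Sum>D\<in>{D \<in> matchings W (induced E W). \<exists>e\<in>D. w \<in> e}. z ^ (card W - 2 * card D)) =
      (\<Sum>(v,D)\<in>(SIGMA v:{v\<in>W. E w v}. ?M v). z ^ (card W - 2 * card (insert {w,v} D)))"
    by (rule sum.reindex_cong[OF inj_on_insert_covering_edge matchings_induced_covering[OF sym w]])
      (auto split: prod.splits)
  also have "\<dots> = (\<Sum>v\<in>{v\<in>W. E w v}. \<Sum>D\<in>?M v. z ^ (card W - 2 * card (insert {w,v} D)))"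
    by (rule sum.Sigma[symmetric]) (use W in \<open>auto intro!: finite_matchings_induced\<close>)
  also have "\<dots> = (\<Sum>v\<in>{v\<in>W. E w v}. matching_poly E (W - {w,v}) z)"
    unfolding matching_poly_def by (intro sum.cong refl) (auto simp: card_insert)
  finally show ?thesis .
qed

lemma matching_poly_rec:
  assumes sym: "\<And>u v. E u v \<Longrightarrow> E v u" and irr: "\<And>u. \<not> E u u"
    and W: "finite W" and w: "w \<in> W"
  shows "matching_poly E W z = z * matching_poly E (W - {w}) z + (\<Sum>v\<in>{v\<in>W. E w v}. matching_poly E (W - {w,v}) z)"
proof -
  let ?f = "\<lambda>D. z ^ (card W - 2 * card D)"
  have "matching_poly E W z = (\<Sum>D\<in>{D \<in> matchings W (induced E W). \<forall>e\<in>D. w \<notin> e}. ?f D)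
      + (\<Sum>D\<in>{D \<in> matchings W (induced E W). \<exists>e\<in>D. w \<in> e}. ?f D)"
    unfolding matching_poly_def
    by (subst sum.union_disjoint[symmetric]) (auto intro: sum.cong simp: finite_matchings_induced W)
  also have "\<dots> = z * matching_poly E (W - {w}) z + (\<Sum>v\<in>{v\<in>W. E w v}. matching_poly E (W - {w,v}) z)"
    by (simp only: sum_matchings_avoiding[where E=E, OF irr W w]
        sum_matchings_covering[where E=E, OF sym irr W w])
  finally show ?thesis .
qed

definition vacancy_ratio :: "('a \<Rightarrow> 'a \<Rightarrow> bool) \<Rightarrow> 'a set \<Rightarrow> 'a \<Rightarrow> 'b::field \<Rightarrow> 'b" where
  "vacancy_ratio E W w z = matching_poly E (W - {w}) z / matching_poly E W z"

lemma inverse_vacancy_ratio_rec: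
  assumes sym: "\<And>u v. E u v \<Longrightarrow> E v u" and irr: "\<And>u. \<not> E u u"
    and W: "finite W" and w: "w \<in> W" and nz: "matching_poly E (W - {w}) z \<noteq> 0"
  shows "1 / vacancy_ratio E W w z = z + (\<Sum>v\<in>{v\<in>W. E w v}. vacancy_ratio E (W - {w}) v z)"
proof -
  have "W - {w,v} = W - {w} - {v}" for v by auto
  with nz show ?thesis
    by (simp add: vacancy_ratio_def matching_poly_rec[where E=E, OF sym irr W w]
        add_divide_distrib sum_divide_distrib)
qed

lemma Re_divide_pos_swap: "0 < Re (a / b) \<Longrightarrow> 0 < Re (b / (a::complex))"
  by (simp add: Re_complex_div_gt_0 mult.commute)

text \<open>Since \<open>a / 0 = 0\<close>, the inequality forces both polynomials to be nonzero.\<close>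

lemma Re_inverse_vacancy_ratio_ge:
  assumes sym: "\<And>u v. E u v \<Longrightarrow> E v u" and irr: "\<And>u. \<not> E u u"
    and z: "0 < Re z" and W: "finite W" and w: "w \<in> W"
  shows "Re z \<le> Re (1 / vacancy_ratio E W w z)"
  using W w
proof (induction "card W" arbitrary: W w rule: less_induct)
  case less
  let ?W' = "W - {w}"
  have IH: "Re z \<le> Re (1 / vacancy_ratio E ?W' v z)" if "v \<in> ?W'" for v
    by (rule less.hyps[OF card_Diff1_less[OF less.prems]]) (use less.prems that in auto)
  have nz: "matching_poly E ?W' z \<noteq> 0"
  proof (cases "?W' = {}")
    case True then show ?thesis by (simp only: True matching_poly_empty) simp
  next
    case False
    then obtain v where "v \<in> ?W'" by blast
    with IH z show ?thesis by (fastforce simp: vacancy_ratio_def)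
  qed
  have "0 < Re (vacancy_ratio E ?W' v z)" if "v \<in> W" "E w v" for v
  proof -
    have "v \<in> ?W'" using that irr by auto
    then have "0 < Re (1 / vacancy_ratio E ?W' v z)" using IH z by fastforce
    then show ?thesis using Re_divide_pos_swap by fastforce
  qed
  then have "0 \<le> (\<Sum>v\<in>{v\<in>W. E w v}. Re (vacancy_ratio E ?W' v z))"
    by (intro sum_nonneg) (simp add: less_imp_le)
  moreover have "1 / vacancy_ratio E W w z = z + (\<Sum>v\<in>{v\<in>W. E w v}. vacancy_ratio E ?W' v z)"
    by (rule inverse_vacancy_ratio_rec[where E=E, OF sym irr less.prems nz])
  ultimately show ?case by (simp add: Re_sum)
qed

lemma matching_poly_nonzero:
  assumes sym: "\<And>u v. E u v \<Longrightarrow> E v u" and irr: "\<And>u. \<not> E u u"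
    and z: "0 < Re z" and W: "finite W"
  shows "matching_poly E W z \<noteq> 0"
proof (cases "W = {}")
  case True then show ?thesis by (simp add: matching_poly_empty)
next
  case False
  then obtain w where "w \<in> W" by blast
  from Re_inverse_vacancy_ratio_ge[where E=E, OF sym irr z W this] z show ?thesis
    by (fastforce simp: vacancy_ratio_def)
qed

lemma norm_vacancy_ratio_le:
  assumes sym: "\<And>u v. E u v \<Longrightarrow> E v u" and irr: "\<And>u. \<not> E u u"
    and z: "0 < Re z" and W: "finite W" and w: "w \<in> W"
  shows "norm (z * vacancy_ratio E W w z) \<le> norm z / Re z"
proof -
  define q where "q = 1 / vacancy_ratio E W w z"
  have "Re z \<le> norm q"
    using Re_inverse_vacancy_ratio_ge[where E=E, OF sym irr z W w] complex_Re_le_cmod[of q]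
    unfolding q_def by linarith
  then have "norm z / norm q \<le> norm z / Re z" using z by (simp add: frac_le)
  then show ?thesis unfolding q_def by (simp add: norm_mult norm_divide)
qed

lemma vacancy_ratio_holomorphic:
  assumes sym: "\<And>u v. E u v \<Longrightarrow> E v u" and irr: "\<And>u. \<not> E u u" and W: "finite W"
  shows "vacancy_ratio E W w holomorphic_on {z. 0 < Re z}"
  unfolding vacancy_ratio_def
  by (intro holomorphic_on_divide matching_poly_holomorphic)
    (use matching_poly_nonzero[where E=E, OF sym irr _ W] in auto)

lemma vacancy_ratio_pos: "finite W \<Longrightarrow> 0 < x \<Longrightarrow> 0 < vacancy_ratio E W w (x::real)"
  unfolding vacancy_ratio_def by (simp add: matching_poly_pos)

lemma walk_nth: "walk V E xs \<Longrightarrow> Suc i < length xs \<Longrightarrow> E (xs ! i) (xs ! Suc i)"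
  unfolding walk_def by blast

lemma walk_set: "walk V E xs \<Longrightarrow> set xs \<subseteq> V"
  unfolding walk_def by blast

lemma walk_nonempty: "walk V E xs \<Longrightarrow> xs \<noteq> []"
  unfolding walk_def by blast

lemma walk_take: "walk V E xs \<Longrightarrow> 0 < n \<Longrightarrow> walk V E (take n xs)"
  unfolding walk_def by (auto dest: in_set_takeD)

lemma walk_drop: "walk V E xs \<Longrightarrow> n < length xs \<Longrightarrow> walk V E (drop n xs)"
  unfolding walk_def by (auto dest: in_set_dropD)

lemma walk_append:
  assumes xs: "walk V E xs" and ys: "walk V E ys" and e: "E (last xs) (hd ys)"
  shows "walk V E (xs @ ys)"
  unfolding walk_def
proof (intro conjI allI impI)
  show "xs @ ys \<noteq> []" "set (xs @ ys) \<subseteq> V"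
    using walk_nonempty[OF xs] walk_set[OF xs] walk_set[OF ys] by auto
  fix i assume i: "Suc i < length (xs @ ys)"
  consider "Suc i < length xs" | "Suc i = length xs" | "length xs \<le> i" by linarith
  then show "E ((xs @ ys) ! i) ((xs @ ys) ! Suc i)"
  proof cases
    case 1 then show ?thesis using walk_nth[OF xs] by (simp add: nth_append)
  next
    case 2
    then have "xs ! i = last xs" "ys ! 0 = hd ys"
      using walk_nonempty[OF xs] walk_nonempty[OF ys] by (auto simp: last_conv_nth hd_conv_nth
        dest: sym[of "Suc i"])
    then show ?thesis using 2 e by (simp add: nth_append)
  next
    case 3
    then show ?thesis using walk_nth[OF ys, of "i - length xs"] i
      by (simp add: nth_append Suc_diff_le)
  qed
qed

lemma walk_mono: "V \<subseteq> V' \<Longrightarrow> walk V E xs \<Longrightarrow> walk V' E xs"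
  unfolding walk_def by blast

lemma walk_Cons: "walk V E xs \<Longrightarrow> w \<in> V \<Longrightarrow> E w (hd xs) \<Longrightarrow> walk V E (w # xs)"
  using walk_append[of V E "[w]" xs] by (simp add: walk_def)

lemma walk_rev:
  assumes sym: "\<And>u v. E u v \<Longrightarrow> E v u" and xs: "walk V E xs"
  shows "walk V E (rev xs)"
  unfolding walk_def
proof (intro conjI allI impI)
  show "rev xs \<noteq> []" "set (rev xs) \<subseteq> V" using walk_nonempty[OF xs] walk_set[OF xs] by auto
  fix i assume i: "Suc i < length (rev xs)"
  then have "E (xs ! (length xs - Suc (Suc i))) (xs ! (length xs - Suc i))"
    using walk_nth[OF xs, of "length xs - Suc (Suc i)"] by (simp add: Suc_diff_Suc)
  then show "E (rev xs ! i) (rev xs ! Suc i)" using i sym by (simp add: rev_nth)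
qed

definition exit_parity :: "('a \<Rightarrow> 'a \<Rightarrow> bool) \<Rightarrow> 'a set \<Rightarrow> 'a set \<Rightarrow> 'a \<Rightarrow> bool \<Rightarrow> bool" where
  "exit_parity E A B w p \<longleftrightarrow>
     (\<forall>xs. walk B E xs \<and> hd xs = w \<and> last xs \<notin> A \<and> set (butlast xs) \<subseteq> A \<longrightarrow> even (length xs) = p)"

lemma exit_parity_step:
  assumes ex: "exit_parity E A B w p" and "A \<subseteq> B" and w: "w \<in> A" and v: "E w v"
  shows "exit_parity E (A - {w}) (B - {w}) v (\<not> p)"
  unfolding exit_parity_def
proof (intro allI impI)
  fix xs assume xs: "walk (B - {w}) E xs \<and> hd xs = v \<and> last xs \<notin> A - {w} \<and> set (butlast xs) \<subseteq> A - {w}"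
  then have wk: "walk (B - {w}) E xs" by blast
  then have "walk B E (w # xs)"
    using walk_Cons[OF walk_mono[OF Diff_subset wk]] xs v w \<open>A \<subseteq> B\<close> by auto
  moreover have "w \<notin> set xs" using walk_set[OF wk] by blast
  moreover have "last xs \<notin> A" using xs \<open>w \<notin> set xs\<close> last_in_set[OF walk_nonempty[OF wk]] by auto
  ultimately have "even (length (w # xs)) = p"
    using ex xs w walk_nonempty unfolding exit_parity_def by fastforce
  then show "even (length xs) = (\<not> p)" by auto
qed

lemma exit_parity_odd_neighbour:
  assumes "exit_parity E A B w False" "w \<in> A" "A \<subseteq> B" "v \<in> B" "E w v"
  shows "v \<in> A"
  using assms unfolding exit_parity_def
  by (auto dest!: spec[of _ "[w, v]"] simp: walk_def less_Suc_eq)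

lemma vacancy_ratio_alternating:
  fixes x :: real
  assumes sym: "\<And>u v. E u v \<Longrightarrow> E v u" and irr: "\<And>u. \<not> E u u" and x: "0 < x"
    and "finite B" "A \<subseteq> B" "w \<in> A" "exit_parity E A B w p"
  shows "if p then vacancy_ratio E B w x \<le> vacancy_ratio E A w x
         else vacancy_ratio E A w x \<le> vacancy_ratio E B w x"
  using assms(4-7)
proof (induction "card B" arbitrary: A B w p rule: less_induct)
  case less
  let ?r = "\<lambda>S v. vacancy_ratio E S v x"
  let ?NA = "{v\<in>A. E w v}" and ?NB = "{v\<in>B. E w v}"
  have B: "finite B" and AB: "A \<subseteq> B" and w: "w \<in> A" and ex: "exit_parity E A B w p"
    using less.prems by auto
  have A: "finite A" and wB: "w \<in> B" using B AB w finite_subset by auto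
  have IH: "if \<not> p then ?r (B - {w}) v \<le> ?r (A - {w}) v else ?r (A - {w}) v \<le> ?r (B - {w}) v"
    if "v \<in> ?NA" for v
    by (rule less.hyps[OF card_Diff1_less[OF B wB]])
      (use B AB that irr exit_parity_step[OF ex AB w] in auto)
  have rec: "1 / ?r S w = x + (\<Sum>v\<in>{v\<in>S. E w v}. ?r (S - {w}) v)" if "finite S" "w \<in> S" for S
  proof (rule inverse_vacancy_ratio_rec[where E=E, OF sym irr that])
    have "0 < matching_poly E (S - {w}) x" using matching_poly_pos that(1) x by blast
    then show "matching_poly E (S - {w}) x \<noteq> 0" by simp
  qed
  have pos: "0 < ?r A w" "0 < ?r B w" by (simp_all add: vacancy_ratio_pos A B x)
  have split: "(\<Sum>v\<in>?NB. ?r (B - {w}) v) = (\<Sum>v\<in>?NA. ?r (B - {w}) v) + (\<Sum>v\<in>?NB - ?NA. ?r (B - {w}) v)"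
    using sum.subset_diff[of ?NA ?NB "\<lambda>v. ?r (B - {w}) v"] AB B by fastforce
  show ?case
  proof (cases p)
    case True
    have "(\<Sum>v\<in>?NA. ?r (A - {w}) v) \<le> (\<Sum>v\<in>?NA. ?r (B - {w}) v)"
      by (rule sum_mono) (use IH True in auto)
    moreover have "0 \<le> (\<Sum>v\<in>?NB - ?NA. ?r (B - {w}) v)"
      by (rule sum_nonneg) (use vacancy_ratio_pos[of "B - {w}" x E] B x in \<open>auto intro: less_imp_le\<close>)
    ultimately have "1 / ?r A w \<le> 1 / ?r B w" using rec[OF A w] rec[OF B wB] split by linarith
    then show ?thesis using pos True by (simp add: field_simps)
  next
    case False
    have "exit_parity E A B w False" using ex False by simp
    then have "?NB - ?NA = {}" using exit_parity_odd_neighbour[OF _ w AB] by blast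
    then have "(\<Sum>v\<in>?NB - ?NA. ?r (B - {w}) v) = 0" by (simp only: sum.empty)
    moreover have "(\<Sum>v\<in>?NA. ?r (B - {w}) v) \<le> (\<Sum>v\<in>?NA. ?r (A - {w}) v)"
      by (rule sum_mono) (use IH False in auto)
    ultimately have "1 / ?r B w \<le> 1 / ?r A w" using rec[OF A w] rec[OF B wB] split by linarith
    then show ?thesis using pos False by (simp add: field_simps)
  qed
qed

lemma has_cycle_fork:
  assumes sym: "\<And>u v. E u v \<Longrightarrow> E v u"
    and p: "walk V E p" "distinct p" "length p = Suc m"
    and q: "walk V E q" "distinct q" "length q = Suc m"
    and k: "k < m" "p ! k = q ! k" and disj: "set (drop k p) \<inter> set (drop (Suc k) q) = {}"
    and e: "E (last p) (last q)"
  shows "has_cycle V E"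
proof -
  define c where "c = drop k p @ rev (drop (Suc k) q)"
  have "walk V E (rev (drop (Suc k) q))" using walk_rev[OF sym walk_drop[OF q(1)]] q k by simp
  then have "walk V E c"
    unfolding c_def using walk_append[OF walk_drop[OF p(1)]] p q k e by (simp add: hd_rev)
  moreover have "distinct c" unfolding c_def using disj p(2) q(2) by simp
  moreover have "3 \<le> length c" unfolding c_def using p(3) q(3) k by simp
  moreover have "last c = q ! Suc k" "hd c = q ! k"
    unfolding c_def using p(3) q(3) k by (simp_all add: last_rev hd_drop_conv_nth)
  moreover have "E (q ! Suc k) (q ! k)" using sym walk_nth[OF q(1)] q(3) k by simp
  ultimately show ?thesis unfolding has_cycle_def by metis
qed

lemma ball_graph_mono: "k \<le> k' \<Longrightarrow> ball_graph V E rt k \<subseteq> ball_graph V E rt k'"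
  unfolding ball_graph_def by force

lemma ball_graph_subset: "ball_graph V E rt k \<subseteq> V"
  unfolding ball_graph_def using walk_set walk_nonempty last_in_set by fastforce

lemma walk_last_in_ball_graph:
  "walk V E xs \<Longrightarrow> hd xs = rt \<Longrightarrow> last xs \<in> ball_graph V E rt (length xs - 1)"
  unfolding ball_graph_def using walk_nonempty by fastforce

lemma ball_graph_Suc_adj:
  assumes "u \<in> ball_graph V E rt k" "E u v" "v \<in> V"
  shows "v \<in> ball_graph V E rt (Suc k)"
proof -
  obtain xs where xs: "walk V E xs" "hd xs = rt" "last xs = u" "length xs \<le> k + 1"
    using assms(1) unfolding ball_graph_def by blast
  have "walk V E (xs @ [v])"
    using walk_append[OF xs(1), of "[v]"] xs(3) assms(2,3) by (simp add: walk_def)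
  moreover have "hd (xs @ [v]) = rt" using xs walk_nonempty[OF xs(1)] by simp
  ultimately show ?thesis unfolding ball_graph_def using xs(4) by force
qed

definition graph_dist :: "'a set \<Rightarrow> ('a \<Rightarrow> 'a \<Rightarrow> bool) \<Rightarrow> 'a \<Rightarrow> 'a \<Rightarrow> nat" where
  "graph_dist V E rt v = (LEAST n. v \<in> ball_graph V E rt n)"

lemma graph_dist_le: "v \<in> ball_graph V E rt k \<Longrightarrow> graph_dist V E rt v \<le> k"
  unfolding graph_dist_def by (rule Least_le)

context
  fixes V :: "'a set" and E :: "'a \<Rightarrow> 'a \<Rightarrow> bool" and rt :: 'a
  assumes T: "tree V E" and rt: "rt \<in> V"
begin

lemma tree_simple: "simple_graph V E"
  using T unfolding tree_def by blast

lemma tree_connected: "connected_graph V E"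
  using T unfolding tree_def by blast

lemma tree_sym: "E u v \<Longrightarrow> E v u"
  and tree_irrefl: "\<not> E u u"
  and tree_adj_in: "E u v \<Longrightarrow> u \<in> V \<and> v \<in> V"
  using tree_simple unfolding simple_graph_def by blast+

lemma in_ball_graph_dist: "v \<in> V \<Longrightarrow> v \<in> ball_graph V E rt (graph_dist V E rt v)"
proof -
  assume "v \<in> V"
  then obtain xs where "walk V E xs" "hd xs = rt" "last xs = v"
    using tree_connected rt unfolding connected_graph_def by blast
  then have "v \<in> ball_graph V E rt (length xs - 1)" using walk_last_in_ball_graph[of V E xs rt] by simp
  then show ?thesis unfolding graph_dist_def by (rule LeastI)
qed

lemma in_ball_graph_iff:
  assumes v: "v \<in> V"
  shows "v \<in> ball_graph V E rt k \<longleftrightarrow> graph_dist V E rt v \<le> k"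
proof
  show "v \<in> ball_graph V E rt k \<Longrightarrow> graph_dist V E rt v \<le> k" by (rule graph_dist_le)
  show "graph_dist V E rt v \<le> k \<Longrightarrow> v \<in> ball_graph V E rt k"
    using ball_graph_mono in_ball_graph_dist[OF v] by (rule subsetD)
qed

lemma root_in_ball_graph: "rt \<in> ball_graph V E rt k"
  unfolding ball_graph_def using rt by (intro CollectI exI[of _ "[rt]"]) (simp add: walk_def)

lemma graph_dist_root: "graph_dist V E rt rt = 0"
  using graph_dist_le[OF root_in_ball_graph[of 0]] by simp

lemma graph_dist_adj_le:
  assumes e: "E u v"
  shows "graph_dist V E rt v \<le> Suc (graph_dist V E rt u)"
proof -
  have "u \<in> V" "v \<in> V" using tree_adj_in[OF e] by auto
  then show ?thesis
    using graph_dist_le[OF ball_graph_Suc_adj[OF in_ball_graph_dist e]] by simp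
qed

lemma shortest_walk:
  assumes v: "v \<in> V"
  obtains p where "walk V E p" "hd p = rt" "last p = v" "length p = Suc (graph_dist V E rt v)"
proof -
  obtain p where p: "walk V E p" "hd p = rt" "last p = v" "length p \<le> graph_dist V E rt v + 1"
    using in_ball_graph_dist[OF v] unfolding ball_graph_def by blast
  have "graph_dist V E rt v \<le> length p - 1"
    using graph_dist_le[OF walk_last_in_ball_graph[OF p(1,2)]] p(3) by simp
  then have "length p = Suc (graph_dist V E rt v)" using p(4) walk_nonempty[OF p(1)] by (cases p) auto
  then show ?thesis using that p by blast
qed

text \<open>A shortest walk is a geodesic: splicing a strictly shorter walk to \<open>p ! i\<close> into \<open>p\<close>
  would reach \<open>last p\<close> too fast.\<close>

lemma graph_dist_shortest_walk_nth:
  assumes p: "walk V E p" "hd p = rt" "length p = Suc (graph_dist V E rt (last p))"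
    and i: "i < length p"
  shows "graph_dist V E rt (p ! i) = i"
proof (rule antisym)
  have "walk V E (take (Suc i) p)" by (rule walk_take[OF p(1)]) simp
  moreover have "hd (take (Suc i) p) = rt" using p(2) by (simp add: hd_take)
  moreover have "last (take (Suc i) p) = p ! i" using i by (simp add: take_Suc_conv_app_nth)
  ultimately have pi: "p ! i \<in> ball_graph V E rt i"
    using walk_last_in_ball_graph[of V E "take (Suc i) p" rt] i by simp
  then show le: "graph_dist V E rt (p ! i) \<le> i" by (rule graph_dist_le)
  show "i \<le> graph_dist V E rt (p ! i)"
  proof (cases "Suc i < length p")
    case True
    obtain s where s: "walk V E s" "hd s = rt" "last s = p ! i"
      "length s = Suc (graph_dist V E rt (p ! i))"
      by (rule shortest_walk[OF subsetD[OF ball_graph_subset pi]])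
    have "walk V E (s @ drop (Suc i) p)"
      using walk_append[OF s(1) walk_drop[OF p(1) True]] s(3) walk_nth[OF p(1) True] True
      by (simp add: hd_drop_conv_nth)
    then have "last p \<in> ball_graph V E rt (length (s @ drop (Suc i) p) - 1)"
      using walk_last_in_ball_graph[of V E "s @ drop (Suc i) p"] s(2) walk_nonempty[OF s(1)] True
      by simp
    then have "graph_dist V E rt (last p) \<le> length (s @ drop (Suc i) p) - 1" by (rule graph_dist_le)
    then show ?thesis using s(4) p(3) True by simp
  next
    case False
    then have "i = length p - 1" using i by simp
    then have "p ! i = last p" using walk_nonempty[OF p(1)] by (simp add: last_conv_nth)
    then show ?thesis using p(3) i by simp
  qed
qed

lemma distinct_shortest_walk:
  assumes "walk V E p" "hd p = rt" "length p = Suc (graph_dist V E rt (last p))"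
  shows "distinct p"
  unfolding distinct_conv_nth using graph_dist_shortest_walk_nth[OF assms] by metis

text \<open>Otherwise the two geodesics from the root, followed from their last common vertex on,
  would close a cycle through the edge.\<close>

lemma graph_dist_adj_neq:
  assumes e: "E u v"
  shows "graph_dist V E rt u \<noteq> graph_dist V E rt v"
proof
  assume eq: "graph_dist V E rt u = graph_dist V E rt v"
  define m where "m = graph_dist V E rt u"
  obtain p where p: "walk V E p" "hd p = rt" "last p = u" "length p = Suc m"
    using shortest_walk tree_adj_in[OF e] m_def by metis
  then have p_geo: "length p = Suc (graph_dist V E rt (last p))" using m_def by simp
  obtain q where q: "walk V E q" "hd q = rt" "last q = v" "length q = Suc m"
    using shortest_walk tree_adj_in[OF e] m_def eq by metis
  then have q_geo: "length q = Suc (graph_dist V E rt (last q))" using m_def eq by simp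
  have dp: "graph_dist V E rt (p ! i) = i" if "i < Suc m" for i
    using graph_dist_shortest_walk_nth[OF p(1,2)] p that m_def by simp
  have dq: "graph_dist V E rt (q ! i) = i" if "i < Suc m" for i
    using graph_dist_shortest_walk_nth[OF q(1,2)] q that m_def eq by simp
  define K where "K = {i. i \<le> m \<and> p ! i = q ! i}"
  define k where "k = Max K"
  have "p ! 0 = rt" "q ! 0 = rt" using p(1,2) q(1,2) walk_nonempty by (metis hd_conv_nth)+
  then have "0 \<in> K" unfolding K_def by simp
  moreover have "finite K" unfolding K_def by simp
  ultimately have kK: "k \<in> K" and kmax: "\<And>i. i \<in> K \<Longrightarrow> i \<le> k"
    unfolding k_def by (auto intro: Max_in Max_ge)
  have "p ! m = u" "q ! m = v" using p q walk_nonempty by (metis diff_Suc_1 last_conv_nth)+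
  moreover have "u \<noteq> v" using tree_irrefl e by blast
  moreover have "k \<le> m" and pq_k: "p ! k = q ! k" using kK unfolding K_def by simp_all
  ultimately have km: "k < m" by (metis le_neq_implies_less)
  have disj: "set (drop k p) \<inter> set (drop (Suc k) q) = {}"
  proof (rule ccontr)
    assume "set (drop k p) \<inter> set (drop (Suc k) q) \<noteq> {}"
    then obtain a where "a \<in> set (drop k p)" "a \<in> set (drop (Suc k) q)" by blast
    then obtain i j where i: "i < length (drop k p)" "drop k p ! i = a"
      and j: "j < length (drop (Suc k) q)" "drop (Suc k) q ! j = a"
      by (auto simp: in_set_conv_nth)
    then have pa: "p ! (k + i) = a" "k + i < Suc m" and qa: "q ! (Suc k + j) = a" "Suc k + j < Suc m"
      using p(4) q(4) by simp_all
    then have "k + i = Suc k + j" using dp[OF pa(2)] dq[OF qa(2)] by simp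
    then have "k + i \<in> K" unfolding K_def using pa qa by simp
    then show False using kmax \<open>k + i = Suc k + j\<close> by fastforce
  qed
  have "E (last p) (last q)" using p(3) q(3) e by simp
  with tree_sym p(1) distinct_shortest_walk[OF p(1,2) p_geo] p(4)
    q(1) distinct_shortest_walk[OF q(1,2) q_geo] q(4) km pq_k disj
  have "has_cycle V E" by (rule has_cycle_fork)
  then show False using T unfolding tree_def by blast
qed

lemma graph_dist_walk_parity:
  assumes xs: "walk V E xs" "hd xs = rt" and i: "i < length xs"
  shows "even (graph_dist V E rt (xs ! i)) = even i"
  using i
proof (induction i)
  case 0
  then show ?case using xs walk_nonempty[OF xs(1)] graph_dist_root by (simp add: hd_conv_nth)
next
  case (Suc i)
  have e: "E (xs ! i) (xs ! Suc i)" using walk_nth[OF xs(1) Suc.prems] .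
  have "graph_dist V E rt (xs ! Suc i) = Suc (graph_dist V E rt (xs ! i))
      \<or> graph_dist V E rt (xs ! i) = Suc (graph_dist V E rt (xs ! Suc i))"
    using graph_dist_adj_le[OF e] graph_dist_adj_le[OF tree_sym[OF e]] graph_dist_adj_neq[OF e]
    by linarith
  then show ?case using Suc.IH Suc.prems by auto
qed

text \<open>Every vertex of \<open>T(r+2)\<close> that is first reached outside \<open>T(r)\<close> lies at depth \<open>r+1\<close>,
  and in a tree the depth along a walk from the root changes parity at every step.\<close>

lemma exit_parity_ball_graph:
  "exit_parity E (ball_graph V E rt r) (ball_graph V E rt (Suc (Suc r))) rt (even r)"
  unfolding exit_parity_def
proof (intro allI impI, elim conjE)
  fix xs assume wk: "walk (ball_graph V E rt (Suc (Suc r))) E xs" and hd: "hd xs = rt"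
    and out: "last xs \<notin> ball_graph V E rt r" and inside: "set (butlast xs) \<subseteq> ball_graph V E rt r"
  have wkV: "walk V E xs" using walk_mono[OF ball_graph_subset wk] .
  define j where "j = length xs - 1"
  have lj: "Suc j = length xs" and lastj: "last xs = xs ! j"
    using walk_nonempty[OF wk] unfolding j_def by (auto simp: last_conv_nth)
  have "j \<noteq> 0"
  proof
    assume "j = 0"
    then have "last xs = rt" using lastj hd walk_nonempty[OF wk] by (simp add: hd_conv_nth)
    then show False using out root_in_ball_graph by simp
  qed
  then have "j - 1 < length (butlast xs)" "butlast xs ! (j - 1) = xs ! (j - 1)"
    using lj by (simp_all add: nth_butlast)
  then have "xs ! (j - 1) \<in> set (butlast xs)" by (metis nth_mem)
  then have "graph_dist V E rt (xs ! (j - 1)) \<le> r" using graph_dist_le[OF subsetD[OF inside]] by simp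
  moreover have "\<not> graph_dist V E rt (xs ! j) \<le> r"
    using out lastj in_ball_graph_iff walk_set[OF wkV] lj by (metis lessI nth_mem subsetD)
  moreover have "graph_dist V E rt (xs ! j) \<le> Suc (graph_dist V E rt (xs ! (j - 1)))"
    using graph_dist_adj_le walk_nth[OF wkV, of "j - 1"] lj \<open>j \<noteq> 0\<close> by simp
  ultimately have "graph_dist V E rt (xs ! j) = Suc r" by linarith
  moreover have "even (graph_dist V E rt (xs ! j)) = even j"
    using graph_dist_walk_parity[OF wkV hd] lj by simp
  ultimately show "even (length xs) = even r" using lj[symmetric] by auto
qed

end

lemma md_R_eq_vacancy_ratio:
  assumes irr: "\<And>u. \<not> E u u" and W: "finite W" and w: "w \<in> W"
  shows "md_R W (induced E W) x w = x * vacancy_ratio E W w x"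
proof -
  have "md_R W (induced E W) x w =
      (\<Sum>D\<in>{D \<in> matchings W (induced E W). \<forall>e\<in>D. w \<notin> e}. x ^ (card W - 2 * card D)) / matching_poly E W x"
    unfolding md_R_def md_measure_def md_Z_def matching_poly_def by (simp add: sum_divide_distrib)
  then show ?thesis
    by (simp add: sum_matchings_avoiding[where E=E, OF irr W w] vacancy_ratio_def)
qed

lemma mult_vacancy_ratio_le_1:
  fixes x :: real
  assumes sym: "\<And>u v. E u v \<Longrightarrow> E v u" and irr: "\<And>u. \<not> E u u"
    and W: "finite W" and w: "w \<in> W" and x: "0 < x"
  shows "x * vacancy_ratio E W w x \<le> 1"
proof -
  have "0 < matching_poly E (W - {w}) x" using matching_poly_pos W x by blast
  then have nz: "matching_poly E (W - {w}) x \<noteq> 0" by linarith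
  note rec = inverse_vacancy_ratio_rec[where E=E, OF sym irr W w nz]
  have "0 \<le> (\<Sum>v\<in>{v\<in>W. E w v}. vacancy_ratio E (W - {w}) v x)"
    by (rule sum_nonneg) (use vacancy_ratio_pos[of "W - {w}" x E] W x in \<open>auto intro: less_imp_le\<close>)
  then have "x \<le> 1 / vacancy_ratio E W w x" using rec by linarith
  then show ?thesis using vacancy_ratio_pos[OF W x, of E w] by (simp add: field_simps)
qed

lemma real_power_series_of_holomorphic:
  fixes h :: "complex \<Rightarrow> complex" and f :: "real \<Rightarrow> real"
  assumes h: "h holomorphic_on ball (of_real x0) r"
    and real: "\<And>x. \<bar>x - x0\<bar> < r \<Longrightarrow> h (of_real x) = of_real (f x)"
  shows "\<exists>c. \<forall>x. \<bar>x - x0\<bar> < r \<longrightarrow> (\<lambda>n. c n * (x - x0) ^ n) sums f x"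
proof (intro exI[of _ "\<lambda>n. Re ((deriv ^^ n) h (of_real x0) / fact n)"] allI impI)
  fix x assume x: "\<bar>x - x0\<bar> < r"
  let ?c = "\<lambda>n. (deriv ^^ n) h (of_real x0) / fact n"
  have "of_real x \<in> ball (of_real x0 :: complex) r"
    using x by (simp add: dist_real_def abs_minus_commute)
  then have "(\<lambda>n. ?c n * (of_real x - of_real x0) ^ n) sums h (of_real x)"
    by (rule holomorphic_power_series[OF h])
  then have "(\<lambda>n. Re (?c n * (of_real x - of_real x0) ^ n)) sums Re (h (of_real x))"
    by (rule sums_Re)
  moreover have "Re (c * (of_real x - of_real x0) ^ n) = Re c * (x - x0) ^ n" for c n
  proof -
    have "(of_real x - of_real x0) ^ n = complex_of_real ((x - x0) ^ n)" by simp
    then show ?thesis by simp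
  qed
  ultimately show "(\<lambda>n. Re (?c n) * (x - x0) ^ n) sums f x"
    by (simp only: real[OF x] Re_complex_of_real)
qed

lemma real_analytic_on_pos_real_part:
  fixes h :: "complex \<Rightarrow> complex" and f :: "real \<Rightarrow> real"
  assumes h: "h holomorphic_on {z. 0 < Re z}" and real: "\<And>x. 0 < x \<Longrightarrow> h (of_real x) = of_real (f x)"
  shows "real_analytic_on f {0<..}"
  unfolding real_analytic_on_def
proof
  fix x0 :: real assume "x0 \<in> {0<..}"
  then have x0: "0 < x0" by simp
  have "ball (of_real x0 :: complex) x0 \<subseteq> {z. 0 < Re z}"
  proof
    fix z :: complex assume "z \<in> ball (of_real x0) x0"
    then have "\<bar>Re z - x0\<bar> < x0"
      using abs_Re_le_cmod[of "z - of_real x0"] by (simp add: dist_norm norm_minus_commute)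
    then show "z \<in> {z. 0 < Re z}" by simp
  qed
  then have "h holomorphic_on ball (of_real x0) x0" using h holomorphic_on_subset by blast
  moreover have "h (of_real x) = of_real (f x)" if "\<bar>x - x0\<bar> < x0" for x
    using real that by simp
  ultimately show "\<exists>\<epsilon>>0. \<exists>c. \<forall>x. \<bar>x - x0\<bar> < \<epsilon> \<longrightarrow> (\<lambda>n. c n * (x - x0) ^ n) sums f x"
    using real_power_series_of_holomorphic x0 by blast
qed

text \<open>A Vitali-type statement: by Montel's theorem a subsequence converges to a holomorphic
  function, and pointwise convergence on the positive reals identifies it there with \<open>f\<close>.\<close>

lemma real_analytic_on_limit:
  fixes G :: "nat \<Rightarrow> complex \<Rightarrow> complex" and F :: "nat \<Rightarrow> real \<Rightarrow> real"
  assumes hol: "\<And>n. G n holomorphic_on {z. 0 < Re z}"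
    and bounded: "\<And>K. compact K \<Longrightarrow> K \<subseteq> {z. 0 < Re z} \<Longrightarrow> \<exists>B. \<forall>n. \<forall>z\<in>K. norm (G n z) \<le> B"
    and real: "\<And>n x. 0 < x \<Longrightarrow> G n (of_real x) = of_real (F n x)"
    and lim: "\<And>x. 0 < x \<Longrightarrow> (\<lambda>n. F n x) \<longlonglongrightarrow> f x"
  shows "real_analytic_on f {0<..}"
proof -
  obtain h \<sigma> where h: "h holomorphic_on {z. 0 < Re z}" and \<sigma>: "strict_mono (\<sigma> :: nat \<Rightarrow> nat)"
    and h_lim: "\<And>z. 0 < Re z \<Longrightarrow> (\<lambda>n. G (\<sigma> n) z) \<longlonglongrightarrow> h z"
    by (rule Montel[where S="{z. 0 < Re z}" and \<H>="range G" and \<F>=G])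
      (use hol bounded open_halfspace_Re_gt in auto)
  have "h (of_real x) = of_real (f x)" if x: "0 < x" for x
  proof -
    have "(\<lambda>n. F (\<sigma> n) x) \<longlonglongrightarrow> f x"
      using LIMSEQ_subseq_LIMSEQ[OF lim[OF x] \<sigma>] by (simp add: o_def)
    then have "(\<lambda>n. G (\<sigma> n) (of_real x)) \<longlonglongrightarrow> of_real (f x)"
      using real[OF x] tendsto_of_real by fastforce
    then show ?thesis using h_lim[of "of_real x"] x LIMSEQ_unique by simp
  qed
  with h show ?thesis by (rule real_analytic_on_pos_real_part)
qed

lemma compact_bounded_norm_div_Re:
  assumes "compact K" "K \<subseteq> {z. 0 < Re z}"
  shows "\<exists>B. \<forall>z\<in>K. norm z / Re z \<le> B"
proof -
  have "continuous_on K (\<lambda>z. norm z / Re z)"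
    using assms(2) by (intro continuous_intros) auto
  then have "bounded ((\<lambda>z. norm z / Re z) ` K)"
    using assms(1) compact_continuous_image compact_imp_bounded by blast
  then obtain B where "\<And>y. y \<in> (\<lambda>z. norm z / Re z) ` K \<Longrightarrow> norm y \<le> B"
    unfolding bounded_iff by blast
  then have "norm z / Re z \<le> B" if "z \<in> K" for z
    using abs_le_D1 imageI[OF that] real_norm_def by metis
  then show ?thesis by blast
qed

definition ball_vacancy :: "'a set \<Rightarrow> ('a \<Rightarrow> 'a \<Rightarrow> bool) \<Rightarrow> 'a \<Rightarrow> real \<Rightarrow> nat \<Rightarrow> real" where
  "ball_vacancy V E rt x r = md_R (ball_graph V E rt r) (induced E (ball_graph V E rt r)) x rt"

context
  fixes V :: "'a set" and E :: "'a \<Rightarrow> 'a \<Rightarrow> bool" and rt :: 'a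
  assumes T: "tree V E" and rt: "rt \<in> V" and lf: "locally_finite_tree V E rt"
begin

lemma finite_ball_graph: "finite (ball_graph V E rt r)"
  using lf unfolding locally_finite_tree_def by blast

lemma ball_vacancy_eq: "ball_vacancy V E rt x r = x * vacancy_ratio E (ball_graph V E rt r) rt x"
  unfolding ball_vacancy_def
  by (rule md_R_eq_vacancy_ratio[OF tree_irrefl[OF T rt] finite_ball_graph root_in_ball_graph[OF T rt]])

lemma Bseq_ball_vacancy: "0 < x \<Longrightarrow> Bseq (\<lambda>n. ball_vacancy V E rt x (g n))"
  using mult_vacancy_ratio_le_1[where E=E, OF tree_sym[OF T rt] tree_irrefl[OF T rt]
      finite_ball_graph root_in_ball_graph[OF T rt]]
    vacancy_ratio_pos[OF finite_ball_graph]
  by (intro BseqI'[of _ 1]) (simp add: ball_vacancy_eq abs_of_pos)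

lemma ball_vacancy_alternating:
  assumes x: "0 < x"
  shows "if even r then ball_vacancy V E rt x (Suc (Suc r)) \<le> ball_vacancy V E rt x r
         else ball_vacancy V E rt x r \<le> ball_vacancy V E rt x (Suc (Suc r))"
proof -
  have "ball_graph V E rt r \<subseteq> ball_graph V E rt (Suc (Suc r))" by (rule ball_graph_mono) simp
  from vacancy_ratio_alternating[where E=E, OF tree_sym[OF T rt] tree_irrefl[OF T rt] x
      finite_ball_graph this root_in_ball_graph[OF T rt] exit_parity_ball_graph[OF T rt]]
  show ?thesis using x by (simp add: ball_vacancy_eq)
qed

lemma convergent_ball_vacancy_even:
  assumes x: "0 < x"
  shows "convergent (\<lambda>r. ball_vacancy V E rt x (2 * r))"
proof (rule Bseq_monoseq_convergent[OF Bseq_ball_vacancy[OF x] decseq_imp_monoseq[OF decseq_SucI]])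
  show "ball_vacancy V E rt x (2 * Suc n) \<le> ball_vacancy V E rt x (2 * n)" for n
    using ball_vacancy_alternating[OF x, of "2 * n"] by simp
qed

lemma convergent_ball_vacancy_odd:
  assumes x: "0 < x"
  shows "convergent (\<lambda>r. ball_vacancy V E rt x (2 * r + 1))"
proof (rule Bseq_monoseq_convergent[OF Bseq_ball_vacancy[OF x] incseq_imp_monoseq[OF incseq_SucI]])
  show "ball_vacancy V E rt x (2 * n + 1) \<le> ball_vacancy V E rt x (2 * Suc n + 1)" for n
    using ball_vacancy_alternating[OF x, of "2 * n + 1"] by simp
qed

lemma real_analytic_on_lim_ball_vacancy:
  assumes conv: "\<And>x. 0 < x \<Longrightarrow> convergent (\<lambda>n. ball_vacancy V E rt x (g n))"
  shows "real_analytic_on (\<lambda>x. lim (\<lambda>n. ball_vacancy V E rt x (g n))) {0<..}"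
proof (rule real_analytic_on_limit)
  let ?G = "\<lambda>n (z::complex). z * vacancy_ratio E (ball_graph V E rt (g n)) rt z"
  show "?G n holomorphic_on {z. 0 < Re z}" for n
    using vacancy_ratio_holomorphic[where E=E, OF tree_sym[OF T rt] tree_irrefl[OF T rt] finite_ball_graph]
    by (intro holomorphic_intros)
  show "\<exists>B. \<forall>n. \<forall>z\<in>K. norm (?G n z) \<le> B" if K: "compact K" "K \<subseteq> {z. 0 < Re z}" for K
  proof -
    obtain B where B: "\<And>z. z \<in> K \<Longrightarrow> norm z / Re z \<le> B"
      using compact_bounded_norm_div_Re[OF K] by blast
    have "norm (?G n z) \<le> B" if "z \<in> K" for n z
    proof -
      have "0 < Re z" using K(2) that by blast
      then have "norm (?G n z) \<le> norm z / Re z"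
        using norm_vacancy_ratio_le[where E=E and W="ball_graph V E rt (g n)" and w=rt,
            OF tree_sym[OF T rt] tree_irrefl[OF T rt]] finite_ball_graph root_in_ball_graph[OF T rt]
        by blast
      then show ?thesis using B[OF that] by linarith
    qed
    then show ?thesis by blast
  qed
  show "?G n (of_real x) = of_real (ball_vacancy V E rt x (g n))" if "0 < x" for n x
    by (simp add: ball_vacancy_eq vacancy_ratio_def matching_poly_of_real)
  show "(\<lambda>n. ball_vacancy V E rt x (g n)) \<longlonglongrightarrow> lim (\<lambda>n. ball_vacancy V E rt x (g n))" if "0 < x" for x
    using conv[OF that] by (simp add: convergent_LIMSEQ_iff)
qed

end

theorem proposition3p4:
  fixes V :: "'a set" and E :: "'a \<Rightarrow> 'a \<Rightarrow> bool" and rt :: 'a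
  assumes "tree V E" and "rt \<in> V" and "locally_finite_tree V E rt"
  defines "Rr \<equiv> (\<lambda>x r. md_R (ball_graph V E rt r) (induced E (ball_graph V E rt r)) x rt)"
  shows "(\<forall>x>0. convergent (\<lambda>r. Rr x (2 * r)) \<and> convergent (\<lambda>r. Rr x (2 * r + 1)))
       \<and> real_analytic_on (\<lambda>x. lim (\<lambda>r. Rr x (2 * r))) {0<..}
       \<and> real_analytic_on (\<lambda>x. lim (\<lambda>r. Rr x (2 * r + 1))) {0<..}"
proof -
  have Rr: "Rr = ball_vacancy V E rt" unfolding Rr_def ball_vacancy_def by (intro ext) simp
  note even = convergent_ball_vacancy_even[OF assms(1-3)]
    and odd = convergent_ball_vacancy_odd[OF assms(1-3)]
  show ?thesis
    unfolding Rr
    using even odd real_analytic_on_lim_ball_vacancy[OF assms(1-3) even]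
      real_analytic_on_lim_ball_vacancy[OF assms(1-3) odd]
    by blast
qed

end
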